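(* In a $\kappa_G$-NMPG with softmax policies, for every agent $i$, every integer $\kappa\le\kappa_G$, and all parameters $\theta=(\theta_{N_i^\kappa},\theta_{-N_i^\kappa})$, $\theta'=(\theta'_{N_i^\kappa},\theta_{-N_i^\kappa})$ that agree outside $N_i^\kappa$, $$\left\|\nabla_{\theta_{N_i^\kappa}}\Phi_i(\theta)-\nabla_{\theta_{N_i^\kappa}}\Phi_i(\theta')\right\|\le L(\kappa)\left\|\theta_{N_i^\kappa}-\theta'_{N_i^\kappa}\right\|,\qquad L(\kappa)=\frac{6n(\kappa)}{(1-\gamma)^3}.$$
   Context: Networked Markov game. There are $n$ agents $\mathcal N=\{1,\dots,n\}$ placed at the nodes of an undirected graph $\mathcal G=(\mathcal N,\mathcal E)$ with graph distance $\mathrm{dist}$. For an integer $\kappa\ge0$, $N_i^\kappa=\{j\in\mathcal N:\mathrm{dist}(i,j)\le\kappa\}$ (so $i\in N_i^\kappa$), $\mathcal N_i=N_i^1$, $-N_i^\kappa=\mathcal N\setminus N_i^\kappa$, and $n(\kappa)=\max_i|N_i^\kappa|$. Agent $i$ has a finite local state space $\mathcal S_i$ and a finite local action space $\mathcal A_i$; $\mathcal S=\prod_i\mathcal S_i$, $\mathcal A=\prod_i\mathcal A_i$, and for $I\subseteq\mathcal N$ we write $s_I,a_I,\mathcal S_I,\mathcal A_I$ for the joint states/actions/spaces of the agents in $I$ (the subscript $-i$ means $\mathcal N\setminus\{i\}$). The dynamics are $\mathcal P(s'\mid s,a)=\prod_i\mathcal P_i(s_i'\mid s_{\mathcal N_i},a_i)$,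 the initial distribution is $\mu\in\Delta(\mathcal S)$, and $\gamma\in(0,1)$ is a discount factor. Each agent has a reward $r_i:\mathcal S\times\mathcal A\to[0,1]$ depending only on $(s_{N_i^{\kappa_r}},a_{N_i^{\kappa_r}})$ for a fixed integer $\kappa_r\ge0$. A local policy of agent $i$ is a map $\xi_i:\mathcal S_i\to\Delta(\mathcal A_i)$; $\Xi_i$ is the set of them, $\Xi_I=\prod_{i\in I}\Xi_i$, $\Xi=\Xi_{\mathcal N}$, and a joint policy $\xi=(\xi_1,\dots,\xi_n)$ acts by $\xi(a\mid s)=\prod_i\xi_i(a_i\mid s_i)$. $J_i(\xi)=\sum_{t\ge0}\gamma^t\mathbb E_\xi[r_i(s(t),a(t))]$ with $s(0)\sim\mu$. Softmax policies: for $\theta_i\in\mathbb R^{|\mathcal S_i||\mathcal A_i|}$, $\xi_i^{\theta_i}(a_i\mid s_i)=\exp(\theta_{i,s_i,a_i})/\sum_{a_i'\in\mathcal A_i}\exp(\theta_{i,s_i,a_i'})$; $\theta=(\theta_1,\dots,\theta_n)$, $\xi^\theta=(\xi_1^{\theta_1},\dots,\xi_n^{\theta_n})$, and we write $J_i(\theta)$ for $J_i(\xi^\theta)$. Norms $\|\cdot\|$ are Euclidean. NMPG: for an integer $\kappa_G\ge0$, the game is a $\kappa_G$-networked Markov potential game ($\kappa_G$-NMPG) if there are functions $\Phi_i:\Xi\to\mathbb R$, $i\in\mathcal N$ (local potentials), such that for every $i\in\mathcal N$, $j\in N_i^{\kappa_G}$, $\xi_j,\xi_j'\in\Xi_j$,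 $\xi_{-j}\in\Xi_{-j}$: $J_j(\xi_j',\xi_{-j})-J_j(\xi_j,\xi_{-j})=\Phi_i(\xi_j',\xi_{-j})-\Phi_i(\xi_j,\xi_{-j})$. We write $\Phi_i(\theta)$ for $\Phi_i(\xi^\theta)$. *)

theory Defs
  imports "HOL-Analysis.Analysis"
begin

(* Graph: agents are the elements of the finite type 'n; E is a symmetric irreflexive edge relation. *)
definition undirected_graph :: "('n \<Rightarrow> 'n \<Rightarrow> bool) \<Rightarrow> bool" where
  "undirected_graph E \<longleftrightarrow> (\<forall>i j. E i j \<longrightarrow> E j i) \<and> (\<forall>i. \<not> E i i)"

(* walk E i ps j : i, ps!0, ..., j is a walk with length ps edges *)
fun walk :: "('n \<Rightarrow> 'n \<Rightarrow> bool) \<Rightarrow> 'n \<Rightarrow> 'n list \<Rightarrow> 'n \<Rightarrow> bool" where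
  "walk E i [] j = (i = j)"
| "walk E i (x # xs) j = (E i x \<and> walk E x xs j)"

definition nbhd :: "('n \<Rightarrow> 'n \<Rightarrow> bool) \<Rightarrow> nat \<Rightarrow> 'n \<Rightarrow> 'n set" where
  "nbhd E k i = {j. \<exists>ps. length ps \<le> k \<and> walk E i ps j}"

definition nk :: "('n::finite \<Rightarrow> 'n \<Rightarrow> bool) \<Rightarrow> nat \<Rightarrow> nat" where
  "nk E k = Max (range (\<lambda>i. card (nbhd E k i)))"

definition jspace :: "('n \<Rightarrow> 'x set) \<Rightarrow> ('n \<Rightarrow> 'x) set" where
  "jspace X = {x. \<forall>i. x i \<in> X i}"

(* local policies: xi i s a = probability of action a in local state s; extensional (zero off carriers) *)
definition local_policy :: "'s set \<Rightarrow> 'a set \<Rightarrow> ('s \<Rightarrow> 'a \<Rightarrow> real) \<Rightarrow> bool" where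
  "local_policy Si Ai p \<longleftrightarrow>
     (\<forall>s a. (s \<notin> Si \<or> a \<notin> Ai) \<longrightarrow> p s a = 0) \<and>
     (\<forall>s\<in>Si. (\<forall>a\<in>Ai. 0 \<le> p s a) \<and> (\<Sum>a\<in>Ai. p s a) = 1)"

definition policies :: "('n \<Rightarrow> 's set) \<Rightarrow> ('n \<Rightarrow> 'a set) \<Rightarrow> ('n \<Rightarrow> 's \<Rightarrow> 'a \<Rightarrow> real) set" where
  "policies S A = {xi. \<forall>i. local_policy (S i) (A i) (xi i)}"

definition joint_pol :: "('n::finite \<Rightarrow> 's \<Rightarrow> 'a \<Rightarrow> real) \<Rightarrow> ('n \<Rightarrow> 's) \<Rightarrow> ('n \<Rightarrow> 'a) \<Rightarrow> real" where
  "joint_pol xi s a = (\<Prod>i\<in>UNIV. xi i (s i) (a i))"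

(* P(s'|s,a) = prod_i P_i(s'_i | s, a_i) ; P_i is assumed to depend on s only through s_{N_i} *)
definition joint_trans :: "('n::finite \<Rightarrow> ('n \<Rightarrow> 's) \<Rightarrow> 'a \<Rightarrow> 's \<Rightarrow> real) \<Rightarrow> ('n \<Rightarrow> 's) \<Rightarrow> ('n \<Rightarrow> 'a) \<Rightarrow> ('n \<Rightarrow> 's) \<Rightarrow> real" where
  "joint_trans P s a s' = (\<Prod>i\<in>UNIV. P i s (a i) (s' i))"

primrec state_dist ::
  "('n::finite \<Rightarrow> 's set) \<Rightarrow> ('n \<Rightarrow> 'a set) \<Rightarrow> ('n \<Rightarrow> ('n \<Rightarrow> 's) \<Rightarrow> 'a \<Rightarrow> 's \<Rightarrow> real) \<Rightarrow>
   (('n \<Rightarrow> 's) \<Rightarrow> real) \<Rightarrow> ('n \<Rightarrow> 's \<Rightarrow> 'a \<Rightarrow> real) \<Rightarrow> nat \<Rightarrow> ('n \<Rightarrow> 's) \<Rightarrow> real" where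
  "state_dist S A P mu xi 0 = mu"
| "state_dist S A P mu xi (Suc t) = (\<lambda>s'. \<Sum>s\<in>jspace S. \<Sum>a\<in>jspace A.
      state_dist S A P mu xi t s * joint_pol xi s a * joint_trans P s a s')"

definition Jval ::
  "('n::finite \<Rightarrow> 's set) \<Rightarrow> ('n \<Rightarrow> 'a set) \<Rightarrow> ('n \<Rightarrow> ('n \<Rightarrow> 's) \<Rightarrow> 'a \<Rightarrow> 's \<Rightarrow> real) \<Rightarrow>
   (('n \<Rightarrow> 's) \<Rightarrow> real) \<Rightarrow> real \<Rightarrow> ('n \<Rightarrow> ('n \<Rightarrow> 's) \<Rightarrow> ('n \<Rightarrow> 'a) \<Rightarrow> real) \<Rightarrow> 'n \<Rightarrow>
   ('n \<Rightarrow> 's \<Rightarrow> 'a \<Rightarrow> real) \<Rightarrow> real" where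
  "Jval S A P mu \<gamma> r i xi = (\<Sum>t. \<gamma> ^ t * (\<Sum>s\<in>jspace S. \<Sum>a\<in>jspace A.
      state_dist S A P mu xi t s * joint_pol xi s a * r i s a))"

definition softmax :: "('n \<Rightarrow> 's set) \<Rightarrow> ('n \<Rightarrow> 'a set) \<Rightarrow> ('n \<Rightarrow> 's \<Rightarrow> 'a \<Rightarrow> real) \<Rightarrow> 'n \<Rightarrow> 's \<Rightarrow> 'a \<Rightarrow> real" where
  "softmax S A \<theta> i s a =
     (if s \<in> S i \<and> a \<in> A i then exp (\<theta> i s a) / (\<Sum>a'\<in>A i. exp (\<theta> i s a')) else 0)"

definition is_NMPG ::
  "('n::finite \<Rightarrow> 'n \<Rightarrow> bool) \<Rightarrow> nat \<Rightarrow> ('n \<Rightarrow> 's set) \<Rightarrow> ('n \<Rightarrow> 'a set) \<Rightarrow>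
   ('n \<Rightarrow> ('n \<Rightarrow> 's \<Rightarrow> 'a \<Rightarrow> real) \<Rightarrow> real) \<Rightarrow> ('n \<Rightarrow> ('n \<Rightarrow> 's \<Rightarrow> 'a \<Rightarrow> real) \<Rightarrow> real) \<Rightarrow> bool" where
  "is_NMPG E \<kappa>G S A J \<Phi> \<longleftrightarrow>
     (\<forall>i. \<forall>j\<in>nbhd E \<kappa>G i. \<forall>xi\<in>policies S A. \<forall>p. local_policy (S j) (A j) p \<longrightarrow>
        J j (xi(j := p)) - J j xi = \<Phi> i (xi(j := p)) - \<Phi> i xi)"

definition coord_fun :: "(('n \<Rightarrow> 's \<Rightarrow> 'a \<Rightarrow> real) \<Rightarrow> real) \<Rightarrow> ('n \<Rightarrow> 's \<Rightarrow> 'a \<Rightarrow> real) \<Rightarrow> 'n \<Rightarrow> 's \<Rightarrow> 'a \<Rightarrow> real \<Rightarrow> real" where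
  "coord_fun F \<theta> j s a = (\<lambda>x. F (\<theta>(j := (\<theta> j)(s := (\<theta> j s)(a := x)))))"

definition partial :: "(('n \<Rightarrow> 's \<Rightarrow> 'a \<Rightarrow> real) \<Rightarrow> real) \<Rightarrow> ('n \<Rightarrow> 's \<Rightarrow> 'a \<Rightarrow> real) \<Rightarrow> 'n \<Rightarrow> 's \<Rightarrow> 'a \<Rightarrow> real" where
  "partial F \<theta> j s a = deriv (coord_fun F \<theta> j s a) (\<theta> j s a)"

definition block_norm :: "('n \<Rightarrow> 's set) \<Rightarrow> ('n \<Rightarrow> 'a set) \<Rightarrow> 'n set \<Rightarrow> ('n \<Rightarrow> 's \<Rightarrow> 'a \<Rightarrow> real) \<Rightarrow> real" where
  "block_norm S A I v = sqrt (\<Sum>j\<in>I. \<Sum>s\<in>S j. \<Sum>a\<in>A j. (v j s a)\<^sup>2)"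

end

theory Submission
  imports Defs
begin

text \<open>For \<open>j \<in> N\<^sub>i\<^sup>\<kappa>\<^sub>G\<close> the potential property makes \<open>\<Phi>\<^sub>i \<circ> softmax\<close> and \<open>J\<^sub>j \<circ> softmax\<close> differ by
  a function of \<open>\<theta>\<^sub>-\<^sub>j\<close> only, so the block gradient of \<open>\<Phi>\<^sub>i\<close> on \<open>N\<^sub>i\<^sup>\<kappa>\<close> is
  \<open>\<theta> \<mapsto> (\<nabla>\<^sub>\<theta>\<^sub>j J\<^sub>j(\<theta>))\<^sub>j\<close>.
  Write \<open>J\<^sub>j = \<Sum>\<^sub>t \<gamma>\<^sup>t R\<^sub>j\<^sub>t\<close> with \<open>R\<^sub>j\<^sub>t\<close> the expected reward at time \<open>t\<close>.
  Along a line in parameter space the likelihood-ratio identities for the product softmax policy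
  bound the second derivative of \<open>R\<^sub>j\<^sub>t\<close> by \<open>(t+1)\<^sup>2\<close> times products of score bounds plus
  \<open>t+1\<close> times the bound on the derivative of the score.
  Let \<open>v\<close> be the difference of the two block gradients and \<open>m = |N\<^sub>i\<^sup>\<kappa>|\<close>.
  Pairing \<open>v\<close> with the gradients and applying the mean value theorem termwise gives
  \<open>\<parallel>v\<parallel>\<^sup>2 \<le> \<Sum>\<^sub>t \<gamma>\<^sup>t 2m(t+1)(t+2) \<parallel>\<theta> - \<theta>'\<parallel> \<parallel>v\<parallel> = 4m/(1-\<gamma>)\<^sup>3 \<parallel>\<theta> - \<theta>'\<parallel> \<parallel>v\<parallel>\<close>,
  and \<open>m \<le> n(\<kappa>)\<close>.\<close>

lemma nbhd_mono: "k \<le> k' \<Longrightarrow> nbhd E k i \<subseteq> nbhd E k' i"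
  unfolding nbhd_def using le_trans by blast

lemma jspace_eq_PiE: "jspace X = Pi\<^sub>E UNIV X"
  unfolding jspace_def PiE_def Pi_def by auto

lemma sum_jspace_prod:
  fixes f :: "'n::finite \<Rightarrow> 'a \<Rightarrow> 'b::comm_semiring_1"
  assumes "\<And>l. finite (X l)"
  shows "(\<Sum>a\<in>jspace X. \<Prod>l\<in>UNIV. f l (a l)) = (\<Prod>l\<in>UNIV. \<Sum>b\<in>X l. f l b)"
  unfolding jspace_eq_PiE by (rule prod_sum_PiE[symmetric]) (auto simp: assms)

lemma abs_convex_comb_le:
  fixes w f :: "'x \<Rightarrow> real"
  assumes "finite X" "\<forall>x\<in>X. 0 \<le> w x" "(\<Sum>x\<in>X. w x) = 1" "\<forall>x\<in>X. \<bar>f x\<bar> \<le> c"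
  shows "\<bar>\<Sum>x\<in>X. w x * f x\<bar> \<le> c"
proof -
  have "\<bar>\<Sum>x\<in>X. w x * f x\<bar> \<le> (\<Sum>x\<in>X. \<bar>w x * f x\<bar>)" by (rule sum_abs)
  also have "\<dots> \<le> (\<Sum>x\<in>X. w x * c)"
    using assms by (intro sum_mono) (auto simp: abs_mult intro: mult_left_mono)
  also have "\<dots> = c" using assms(3) by (simp add: sum_distrib_right[symmetric])
  finally show ?thesis .
qed

lemma abs_mult_le_mult: "\<bar>x::real\<bar> \<le> a \<Longrightarrow> \<bar>y\<bar> \<le> b \<Longrightarrow> \<bar>x * y\<bar> \<le> a * b"
  by (simp add: abs_mult mult_mono')

lemma sum_le_sqrt_card_mult_sqrt_sum_sq:
  fixes f :: "'i \<Rightarrow> real"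
  shows "(\<Sum>x\<in>B. f x) \<le> sqrt (card B) * sqrt (\<Sum>x\<in>B. (f x)\<^sup>2)"
proof -
  have "(\<Sum>x\<in>B. 1 * f x)\<^sup>2 \<le> (\<Sum>x\<in>B. 1\<^sup>2) * (\<Sum>x\<in>B. (f x)\<^sup>2)"
    by (rule Cauchy_Schwarz_ineq_sum)
  then have "sqrt ((\<Sum>x\<in>B. f x)\<^sup>2) \<le> sqrt (card B * (\<Sum>x\<in>B. (f x)\<^sup>2))"
    by (intro real_sqrt_le_mono) simp
  then show ?thesis by (simp add: real_sqrt_mult)
qed

lemma DERIV_prod_logderiv:
  fixes f :: "'i \<Rightarrow> real \<Rightarrow> real"
  assumes "finite L" "\<And>l. l \<in> L \<Longrightarrow> ((\<lambda>x. f l x) has_real_derivative f l x0 * g l) (at x0)"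
  shows "((\<lambda>x. \<Prod>l\<in>L. f l x) has_real_derivative (\<Prod>l\<in>L. f l x0) * (\<Sum>l\<in>L. g l)) (at x0)"
  using assms
proof (induction L rule: finite_induct)
  case (insert m L)
  have "((\<lambda>x. f m x * (\<Prod>l\<in>L. f l x)) has_real_derivative
          f m x0 * ((\<Prod>l\<in>L. f l x0) * (\<Sum>l\<in>L. g l)) + f m x0 * g m * (\<Prod>l\<in>L. f l x0)) (at x0)"
    using insert by (intro DERIV_mult') auto
  then show ?case using insert by (simp add: algebra_simps)
qed simp

lemma Suc_mult_Suc_Suc_power_sums:
  assumes "\<bar>z::real\<bar> < 1"
  shows "(\<lambda>n. ((real n + 1) * (real n + 2)) * z ^ n) sums (2 / (1 - z)^3)"
proof -
  have nz: "1 - z \<noteq> 0" using assms by auto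
  have "(\<lambda>n. diffs (\<lambda>n. real (Suc n)) n * z ^ n) sums (2 / (1 - z)^3)"
  proof (rule termdiffs_sums_strong[where K = 1])
    fix y :: real assume "norm y < 1"
    then show "(\<lambda>n. real (Suc n) * y ^ n) sums (1 / (1 - y)^2)"
      using geometric_deriv_sums[of y] by simp
  next
    have "((\<lambda>y. 1 / (1 - y)^2) has_real_derivative
       (0 * (1 - z)^2 - 1 * (of_nat 2 * ((0 - 1) * (1 - z) ^ (2 - Suc 0)))) / ((1 - z)^2 * (1 - z)^2)) (at z)"
      using nz by (intro DERIV_divide DERIV_power DERIV_diff DERIV_const DERIV_ident) auto
    moreover have "(0 * (1 - z)^2 - 1 * (of_nat 2 * ((0 - 1) * (1 - z) ^ (2 - Suc 0)))) / ((1 - z)^2 * (1 - z)^2)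
        = ((1 - z) * 2) / ((1 - z) * (1 - z)^3)"
      by (simp add: power2_eq_square power3_eq_cube algebra_simps)
    moreover have "((1 - z) * 2) / ((1 - z) * (1 - z)^3) = 2 / (1 - z)^3"
      using nz by (rule mult_divide_mult_cancel_left)
    ultimately show "((\<lambda>y. 1 / (1 - y)^2) has_real_derivative 2 / (1 - z)^3) (at z)" by simp
  qed (use assms in auto)
  then show ?thesis unfolding diffs_def by (simp add: mult.commute add.commute)
qed

locale discounted_game =
  fixes S :: "'n::finite \<Rightarrow> 's::finite set"
    and A :: "'n \<Rightarrow> 'a::finite set"
    and P :: "'n \<Rightarrow> ('n \<Rightarrow> 's) \<Rightarrow> 'a \<Rightarrow> 's \<Rightarrow> real"
    and mu :: "('n \<Rightarrow> 's) \<Rightarrow> real"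
    and \<gamma> :: real
    and r :: "'n \<Rightarrow> ('n \<Rightarrow> 's) \<Rightarrow> ('n \<Rightarrow> 'a) \<Rightarrow> real"
  assumes A_ne: "\<forall>j. A j \<noteq> {}"
    and P_nonneg: "\<forall>j. \<forall>s\<in>jspace S. \<forall>a\<in>A j. \<forall>s'\<in>S j. 0 \<le> P j s a s'"
    and P_sum: "\<forall>j. \<forall>s\<in>jspace S. \<forall>a\<in>A j. (\<Sum>s'\<in>S j. P j s a s') = 1"
    and mu_nonneg: "\<forall>s\<in>jspace S. 0 \<le> mu s"
    and mu_sum: "(\<Sum>s\<in>jspace S. mu s) = 1"
    and gamma: "0 < \<gamma>" "\<gamma> < 1"
    and r_range: "\<forall>j. \<forall>s\<in>jspace S. \<forall>a\<in>jspace A. 0 \<le> r j s a \<and> r j s a \<le> 1"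
begin

abbreviation "jS \<equiv> jspace S"
abbreviation "jA \<equiv> jspace A"

text \<open>Unlike \<open>policies S A\<close>, no condition is imposed off the carriers.\<close>
definition policy :: "('n \<Rightarrow> 's \<Rightarrow> 'a \<Rightarrow> real) \<Rightarrow> bool" where
  "policy \<xi> \<longleftrightarrow> (\<forall>l. \<forall>s\<in>S l. (\<forall>a\<in>A l. 0 \<le> \<xi> l s a) \<and> (\<Sum>a\<in>A l. \<xi> l s a) = 1)"

definition expect_next :: "('n \<Rightarrow> 's) \<Rightarrow> ('n \<Rightarrow> 'a) \<Rightarrow> (('n \<Rightarrow> 's) \<Rightarrow> real) \<Rightarrow> real" where
  "expect_next s a V = (\<Sum>s'\<in>jS. joint_trans P s a s' * V s')"

lemma joint_trans_nonneg: "s \<in> jS \<Longrightarrow> a \<in> jA \<Longrightarrow> s' \<in> jS \<Longrightarrow> 0 \<le> joint_trans P s a s'"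
  unfolding joint_trans_def using P_nonneg by (intro prod_nonneg) (auto simp: jspace_def)

lemma joint_trans_sum_one: "s \<in> jS \<Longrightarrow> a \<in> jA \<Longrightarrow> (\<Sum>s'\<in>jS. joint_trans P s a s') = 1"
  unfolding joint_trans_def
  by (subst sum_jspace_prod[where f = "\<lambda>l b. P l s (a l) b"]) (use P_sum in \<open>auto simp: jspace_def\<close>)

lemma abs_expect_next_le: "s \<in> jS \<Longrightarrow> a \<in> jA \<Longrightarrow> \<forall>s'\<in>jS. \<bar>V s'\<bar> \<le> c \<Longrightarrow> \<bar>expect_next s a V\<bar> \<le> c"
  unfolding expect_next_def by (rule abs_convex_comb_le) (auto simp: joint_trans_nonneg joint_trans_sum_one)

lemma joint_pol_nonneg: "policy \<xi> \<Longrightarrow> s \<in> jS \<Longrightarrow> a \<in> jA \<Longrightarrow> 0 \<le> joint_pol \<xi> s a"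
  unfolding joint_pol_def policy_def by (intro prod_nonneg) (auto simp: jspace_def)

lemma joint_pol_sum_one: "policy \<xi> \<Longrightarrow> s \<in> jS \<Longrightarrow> (\<Sum>a\<in>jA. joint_pol \<xi> s a) = 1"
  unfolding joint_pol_def
  by (subst sum_jspace_prod[where f = "\<lambda>l b. \<xi> l (s l) b"]) (auto simp: jspace_def policy_def)

lemma abs_joint_pol_avg_le:
  "policy \<xi> \<Longrightarrow> s \<in> jS \<Longrightarrow> \<forall>a\<in>jA. \<bar>f a\<bar> \<le> c \<Longrightarrow> \<bar>\<Sum>a\<in>jA. joint_pol \<xi> s a * f a\<bar> \<le> c"
  by (rule abs_convex_comb_le) (auto simp: joint_pol_nonneg joint_pol_sum_one)

lemma abs_mu_avg_le: "\<forall>s\<in>jS. \<bar>f s\<bar> \<le> c \<Longrightarrow> \<bar>\<Sum>s\<in>jS. mu s * f s\<bar> \<le> c"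
  by (rule abs_convex_comb_le) (auto simp: mu_nonneg mu_sum)

primrec exp_reward :: "('n \<Rightarrow> 's \<Rightarrow> 'a \<Rightarrow> real) \<Rightarrow> 'n \<Rightarrow> nat \<Rightarrow> ('n \<Rightarrow> 's) \<Rightarrow> real" where
  "exp_reward \<xi> j 0 s = (\<Sum>a\<in>jA. joint_pol \<xi> s a * r j s a)"
| "exp_reward \<xi> j (Suc k) s = (\<Sum>a\<in>jA. joint_pol \<xi> s a * expect_next s a (exp_reward \<xi> j k))"

lemma abs_exp_reward_le: "policy \<xi> \<Longrightarrow> s \<in> jS \<Longrightarrow> \<bar>exp_reward \<xi> j k s\<bar> \<le> 1"
proof (induction k arbitrary: s)
  case 0
  then show ?case using r_range by (auto intro!: abs_joint_pol_avg_le)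
next
  case (Suc k)
  then show ?case by (auto intro!: abs_joint_pol_avg_le abs_expect_next_le)
qed

lemma state_dist_exp_reward:
  "(\<Sum>s\<in>jS. state_dist S A P mu \<xi> t s * exp_reward \<xi> j k s) = (\<Sum>s\<in>jS. mu s * exp_reward \<xi> j (t + k) s)"
proof (induction t arbitrary: k)
  case (Suc t)
  let ?d = "state_dist S A P mu \<xi> t"
  have "(\<Sum>s'\<in>jS. state_dist S A P mu \<xi> (Suc t) s' * exp_reward \<xi> j k s')
      = (\<Sum>s'\<in>jS. \<Sum>s\<in>jS. \<Sum>a\<in>jA. ?d s * joint_pol \<xi> s a * joint_trans P s a s' * exp_reward \<xi> j k s')"
    by (simp add: sum_distrib_right)
  also have "\<dots> = (\<Sum>s\<in>jS. \<Sum>a\<in>jA. \<Sum>s'\<in>jS. ?d s * joint_pol \<xi> s a * joint_trans P s a s' * exp_reward \<xi> j k s')"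
    by (subst sum.swap) (intro sum.cong refl sum.swap)
  also have "\<dots> = (\<Sum>s\<in>jS. ?d s * exp_reward \<xi> j (Suc k) s)"
    by (simp add: expect_next_def sum_distrib_left mult.assoc)
  also have "\<dots> = (\<Sum>s\<in>jS. mu s * exp_reward \<xi> j (Suc t + k) s)"
    using Suc[of "Suc k"] by simp
  finally show ?case .
qed simp

lemma Jval_eq_exp_reward: "Jval S A P mu \<gamma> r j \<xi> = (\<Sum>t. \<gamma> ^ t * (\<Sum>s\<in>jS. mu s * exp_reward \<xi> j t s))"
proof -
  have "(\<Sum>s\<in>jS. \<Sum>a\<in>jA. state_dist S A P mu \<xi> t s * joint_pol \<xi> s a * r j s a)
        = (\<Sum>s\<in>jS. mu s * exp_reward \<xi> j t s)" for t
    using state_dist_exp_reward[of \<xi> t j 0] by (simp add: sum_distrib_left mult.assoc)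
  then show ?thesis unfolding Jval_def by simp
qed


section \<open>Score functions and their bounds\<close>

text \<open>Along \<open>\<xi> = softmax (\<theta> + x u)\<close> the log-derivative of \<open>\<xi>\<^sub>l(b|s)\<close> is \<open>centred \<xi> u l s b\<close>,
  so \<open>score \<xi> u\<close> is the log-derivative of \<open>joint_pol\<close> in direction \<open>u\<close> and
  \<open>score_deriv \<xi> u w\<close> is the derivative of \<open>score \<xi> w\<close>.\<close>
definition centred :: "('n \<Rightarrow> 's \<Rightarrow> 'a \<Rightarrow> real) \<Rightarrow> ('n \<Rightarrow> 's \<Rightarrow> 'a \<Rightarrow> real) \<Rightarrow> 'n \<Rightarrow> 's \<Rightarrow> 'a \<Rightarrow> real" where
  "centred \<xi> u l sl b = u l sl b - (\<Sum>c\<in>A l. \<xi> l sl c * u l sl c)"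

definition score :: "('n \<Rightarrow> 's \<Rightarrow> 'a \<Rightarrow> real) \<Rightarrow> ('n \<Rightarrow> 's \<Rightarrow> 'a \<Rightarrow> real) \<Rightarrow> ('n \<Rightarrow> 's) \<Rightarrow> ('n \<Rightarrow> 'a) \<Rightarrow> real" where
  "score \<xi> u s a = (\<Sum>l\<in>UNIV. centred \<xi> u l (s l) (a l))"

definition score_deriv :: "('n \<Rightarrow> 's \<Rightarrow> 'a \<Rightarrow> real) \<Rightarrow> ('n \<Rightarrow> 's \<Rightarrow> 'a \<Rightarrow> real) \<Rightarrow> ('n \<Rightarrow> 's \<Rightarrow> 'a \<Rightarrow> real) \<Rightarrow>
    ('n \<Rightarrow> 's) \<Rightarrow> ('n \<Rightarrow> 'a) \<Rightarrow> real" where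
  "score_deriv \<xi> u w s a = - (\<Sum>l\<in>UNIV. \<Sum>b\<in>A l. \<xi> l (s l) b * centred \<xi> u l (s l) b * w l (s l) b)"

definition agent_norm :: "('n \<Rightarrow> 's \<Rightarrow> 'a \<Rightarrow> real) \<Rightarrow> 'n \<Rightarrow> real" where
  "agent_norm u l = sqrt (\<Sum>s\<in>S l. \<Sum>b\<in>A l. (u l s b)\<^sup>2)"

definition score_bound :: "('n \<Rightarrow> 's \<Rightarrow> 'a \<Rightarrow> real) \<Rightarrow> real" where
  "score_bound u = sqrt 2 * (\<Sum>l\<in>UNIV. agent_norm u l)"

definition score_deriv_bound :: "('n \<Rightarrow> 's \<Rightarrow> 'a \<Rightarrow> real) \<Rightarrow> ('n \<Rightarrow> 's \<Rightarrow> 'a \<Rightarrow> real) \<Rightarrow> real" where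
  "score_deriv_bound u w = sqrt 2 * (\<Sum>l\<in>UNIV. agent_norm u l * agent_norm w l)"

lemma agent_norm_nonneg: "0 \<le> agent_norm u l"
  unfolding agent_norm_def by (auto intro!: sum_nonneg)

lemma agent_norm_sq: "(agent_norm u l)\<^sup>2 = (\<Sum>s\<in>S l. \<Sum>b\<in>A l. (u l s b)\<^sup>2)"
  unfolding agent_norm_def by (rule real_sqrt_pow2) (auto intro!: sum_nonneg)

lemma sum_sq_entries_le_agent_norm_sq:
  assumes "sl \<in> S l" "C \<subseteq> A l"
  shows "(\<Sum>b\<in>C. (u l sl b)\<^sup>2) \<le> (agent_norm u l)\<^sup>2"
proof -
  have "(\<Sum>b\<in>C. (u l sl b)\<^sup>2) \<le> (\<Sum>b\<in>A l. (u l sl b)\<^sup>2)"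
    using assms by (intro sum_mono2) auto
  also have "\<dots> \<le> (\<Sum>s\<in>S l. \<Sum>b\<in>A l. (u l s b)\<^sup>2)"
    using assms by (intro member_le_sum[where f = "\<lambda>s. \<Sum>b\<in>A l. (u l s b)\<^sup>2"]) (auto intro!: sum_nonneg)
  finally show ?thesis by (simp add: agent_norm_sq)
qed

lemma abs_entry_le_agent_norm:
  assumes "sl \<in> S l" "b \<in> A l"
  shows "\<bar>u l sl b\<bar> \<le> agent_norm u l"
proof -
  have "(u l sl b)\<^sup>2 \<le> (agent_norm u l)\<^sup>2"
    using sum_sq_entries_le_agent_norm_sq[of sl l "{b}" u] assms by simp
  then show ?thesis by (metis abs_of_nonneg agent_norm_nonneg real_sqrt_abs real_sqrt_le_mono)
qed

lemma abs_entry_diff_le_agent_norm: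
  assumes "sl \<in> S l" "a \<in> A l" "c \<in> A l"
  shows "\<bar>u l sl a - u l sl c\<bar> \<le> sqrt 2 * agent_norm u l"
proof (cases "a = c")
  case False
  have "(u l sl a - u l sl c)\<^sup>2 \<le> 2 * ((u l sl a)\<^sup>2 + (u l sl c)\<^sup>2)"
    using sum_squares_bound[of "u l sl a" "- u l sl c"] by (simp add: power2_diff)
  also have "(u l sl a)\<^sup>2 + (u l sl c)\<^sup>2 \<le> (agent_norm u l)\<^sup>2"
    using sum_sq_entries_le_agent_norm_sq[of sl l "{a, c}" u] assms False by simp
  finally have "(u l sl a - u l sl c)\<^sup>2 \<le> (sqrt 2 * agent_norm u l)\<^sup>2"
    by (simp add: power_mult_distrib)
  then show ?thesis
    by (metis abs_of_nonneg agent_norm_nonneg mult_nonneg_nonneg real_sqrt_abs real_sqrt_ge_zero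
        real_sqrt_le_mono zero_le_numeral)
qed (simp add: agent_norm_nonneg)

lemma abs_centred_le:
  assumes "policy \<xi>" "sl \<in> S l" "a \<in> A l"
  shows "\<bar>centred \<xi> u l sl a\<bar> \<le> sqrt 2 * agent_norm u l"
proof -
  have "centred \<xi> u l sl a = (\<Sum>c\<in>A l. \<xi> l sl c * (u l sl a - u l sl c))"
    using assms unfolding centred_def policy_def
    by (simp add: right_diff_distrib sum_subtractf sum_distrib_right[symmetric])
  also have "\<bar>\<dots>\<bar> \<le> sqrt 2 * agent_norm u l"
    using assms by (intro abs_convex_comb_le) (auto simp: policy_def abs_entry_diff_le_agent_norm)
  finally show ?thesis .
qed

lemma abs_score_le: "policy \<xi> \<Longrightarrow> s \<in> jS \<Longrightarrow> a \<in> jA \<Longrightarrow> \<bar>score \<xi> u s a\<bar> \<le> score_bound u"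
proof -
  assume h: "policy \<xi>" "s \<in> jS" "a \<in> jA"
  have "\<bar>score \<xi> u s a\<bar> \<le> (\<Sum>l\<in>UNIV. \<bar>centred \<xi> u l (s l) (a l)\<bar>)"
    unfolding score_def by (rule sum_abs)
  also have "\<dots> \<le> (\<Sum>l\<in>UNIV. sqrt 2 * agent_norm u l)"
    using h by (intro sum_mono abs_centred_le) (auto simp: jspace_def)
  finally show ?thesis by (simp add: score_bound_def sum_distrib_left)
qed

lemma abs_score_deriv_le:
  "policy \<xi> \<Longrightarrow> s \<in> jS \<Longrightarrow> a \<in> jA \<Longrightarrow> \<bar>score_deriv \<xi> u w s a\<bar> \<le> score_deriv_bound u w"
proof -
  assume h: "policy \<xi>" "s \<in> jS" "a \<in> jA"
  have "\<bar>score_deriv \<xi> u w s a\<bar>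
      \<le> (\<Sum>l\<in>UNIV. \<bar>\<Sum>b\<in>A l. \<xi> l (s l) b * (centred \<xi> u l (s l) b * w l (s l) b)\<bar>)"
    unfolding score_deriv_def by (simp add: mult.assoc sum_abs)
  also have "\<dots> \<le> (\<Sum>l\<in>UNIV. sqrt 2 * agent_norm u l * agent_norm w l)"
  proof (intro sum_mono abs_convex_comb_le ballI)
    fix l b assume b: "b \<in> A l"
    have sl: "s l \<in> S l" using h by (auto simp: jspace_def)
    show "\<bar>centred \<xi> u l (s l) b * w l (s l) b\<bar> \<le> sqrt 2 * agent_norm u l * agent_norm w l"
      using abs_centred_le[OF h(1) sl b] abs_entry_le_agent_norm[OF sl b] by (intro abs_mult_le_mult) auto
  qed (use h in \<open>auto simp: policy_def jspace_def\<close>)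
  finally show ?thesis by (simp add: score_deriv_bound_def sum_distrib_left mult.assoc)
qed


text \<open>First and second derivatives of \<open>exp_reward\<close> along \<open>softmax (\<theta> + x u)\<close>, in the
  directions \<open>u\<close> and \<open>u, w\<close>; the derivative of \<open>joint_pol \<xi> s a\<close> is \<open>joint_pol \<xi> s a * score \<xi> u s a\<close>.\<close>
primrec exp_reward_deriv ::
  "('n \<Rightarrow> 's \<Rightarrow> 'a \<Rightarrow> real) \<Rightarrow> ('n \<Rightarrow> 's \<Rightarrow> 'a \<Rightarrow> real) \<Rightarrow> 'n \<Rightarrow> nat \<Rightarrow> ('n \<Rightarrow> 's) \<Rightarrow> real" where
  "exp_reward_deriv \<xi> u j 0 s = (\<Sum>a\<in>jA. joint_pol \<xi> s a * (score \<xi> u s a * r j s a))"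
| "exp_reward_deriv \<xi> u j (Suc k) s = (\<Sum>a\<in>jA. joint_pol \<xi> s a *
      (score \<xi> u s a * expect_next s a (exp_reward \<xi> j k) + expect_next s a (exp_reward_deriv \<xi> u j k)))"

primrec exp_reward_deriv2 ::
  "('n \<Rightarrow> 's \<Rightarrow> 'a \<Rightarrow> real) \<Rightarrow> ('n \<Rightarrow> 's \<Rightarrow> 'a \<Rightarrow> real) \<Rightarrow> ('n \<Rightarrow> 's \<Rightarrow> 'a \<Rightarrow> real) \<Rightarrow>
    'n \<Rightarrow> nat \<Rightarrow> ('n \<Rightarrow> 's) \<Rightarrow> real" where
  "exp_reward_deriv2 \<xi> u w j 0 s =
     (\<Sum>a\<in>jA. joint_pol \<xi> s a * ((score \<xi> u s a * score \<xi> w s a + score_deriv \<xi> u w s a) * r j s a))"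
| "exp_reward_deriv2 \<xi> u w j (Suc k) s = (\<Sum>a\<in>jA. joint_pol \<xi> s a *
      ((score \<xi> u s a * score \<xi> w s a + score_deriv \<xi> u w s a) * expect_next s a (exp_reward \<xi> j k)
       + score \<xi> w s a * expect_next s a (exp_reward_deriv \<xi> u j k)
       + score \<xi> u s a * expect_next s a (exp_reward_deriv \<xi> w j k)
       + expect_next s a (exp_reward_deriv2 \<xi> u w j k)))"

lemma abs_exp_reward_deriv_le:
  assumes "policy \<xi>"
  shows "s \<in> jS \<Longrightarrow> \<bar>exp_reward_deriv \<xi> u j k s\<bar> \<le> (real k + 1) * score_bound u"
proof (induction k arbitrary: s)
  case 0
  have "\<bar>score \<xi> u s a * r j s a\<bar> \<le> score_bound u * 1" if "a \<in> jA" for a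
    using that 0 assms r_range by (intro abs_mult_le_mult abs_score_le) auto
  then show ?case using 0 assms by (auto intro!: abs_joint_pol_avg_le)
next
  case (Suc k)
  have "\<bar>score \<xi> u s a * expect_next s a (exp_reward \<xi> j k) + expect_next s a (exp_reward_deriv \<xi> u j k)\<bar>
      \<le> score_bound u * 1 + (real k + 1) * score_bound u" if "a \<in> jA" for a
  proof -
    have "\<bar>score \<xi> u s a * expect_next s a (exp_reward \<xi> j k)\<bar> \<le> score_bound u * 1"
      using that Suc assms by (intro abs_mult_le_mult abs_score_le abs_expect_next_le) (auto simp: abs_exp_reward_le)
    moreover have "\<bar>expect_next s a (exp_reward_deriv \<xi> u j k)\<bar> \<le> (real k + 1) * score_bound u"
      using that Suc by (intro abs_expect_next_le) auto
    ultimately show ?thesis by linarith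
  qed
  then have "\<bar>exp_reward_deriv \<xi> u j (Suc k) s\<bar> \<le> score_bound u * 1 + (real k + 1) * score_bound u"
    using Suc assms by (simp only: exp_reward_deriv.simps) (intro abs_joint_pol_avg_le ballI)
  then show ?case by (simp add: algebra_simps)
qed

lemma abs_score_mult_score_add_score_deriv_le:
  assumes "policy \<xi>" "s \<in> jS" "a \<in> jA"
  shows "\<bar>score \<xi> u s a * score \<xi> w s a + score_deriv \<xi> u w s a\<bar>
    \<le> score_bound u * score_bound w + score_deriv_bound u w"
proof -
  have "\<bar>score \<xi> u s a * score \<xi> w s a\<bar> \<le> score_bound u * score_bound w"
    using assms by (intro abs_mult_le_mult abs_score_le)
  moreover have "\<bar>score_deriv \<xi> u w s a\<bar> \<le> score_deriv_bound u w" by (rule abs_score_deriv_le[OF assms])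
  ultimately show ?thesis by linarith
qed

lemma abs_exp_reward_deriv2_le:
  assumes "policy \<xi>"
  shows "s \<in> jS \<Longrightarrow> \<bar>exp_reward_deriv2 \<xi> u w j k s\<bar>
    \<le> (real k + 1)\<^sup>2 * (score_bound u * score_bound w) + (real k + 1) * score_deriv_bound u w"
proof (induction k arbitrary: s)
  let ?cu = "score_bound u" and ?cw = "score_bound w" and ?cd = "score_deriv_bound u w"
  note coeff = abs_score_mult_score_add_score_deriv_le[OF assms]
  {
    case 0
    have "\<bar>(score \<xi> u s a * score \<xi> w s a + score_deriv \<xi> u w s a) * r j s a\<bar> \<le> (?cu * ?cw + ?cd) * 1"
      if "a \<in> jA" for a
      using coeff[OF 0 that] that 0 r_range by (intro abs_mult_le_mult) auto
    then show ?case using 0 assms by (auto intro!: abs_joint_pol_avg_le)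
  next
    case (Suc k)
    let ?X = "\<lambda>a. (score \<xi> u s a * score \<xi> w s a + score_deriv \<xi> u w s a) * expect_next s a (exp_reward \<xi> j k)
         + score \<xi> w s a * expect_next s a (exp_reward_deriv \<xi> u j k)
         + score \<xi> u s a * expect_next s a (exp_reward_deriv \<xi> w j k)
         + expect_next s a (exp_reward_deriv2 \<xi> u w j k)"
    have "\<bar>?X a\<bar> \<le> (real k + 2)\<^sup>2 * (?cu * ?cw) + (real k + 2) * ?cd" if a: "a \<in> jA" for a
    proof -
      have "\<bar>(score \<xi> u s a * score \<xi> w s a + score_deriv \<xi> u w s a) * expect_next s a (exp_reward \<xi> j k)\<bar>
          \<le> (?cu * ?cw + ?cd) * 1"
        using coeff[OF Suc.prems a] a Suc assms
        by (intro abs_mult_le_mult abs_expect_next_le) (auto simp: abs_exp_reward_le)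
      moreover have "\<bar>score \<xi> w s a * expect_next s a (exp_reward_deriv \<xi> u j k)\<bar> \<le> ?cw * ((real k + 1) * ?cu)"
        using a Suc assms by (intro abs_mult_le_mult abs_score_le abs_expect_next_le ballI abs_exp_reward_deriv_le)
      moreover have "\<bar>score \<xi> u s a * expect_next s a (exp_reward_deriv \<xi> w j k)\<bar> \<le> ?cu * ((real k + 1) * ?cw)"
        using a Suc assms by (intro abs_mult_le_mult abs_score_le abs_expect_next_le ballI abs_exp_reward_deriv_le)
      moreover have "\<bar>expect_next s a (exp_reward_deriv2 \<xi> u w j k)\<bar>
          \<le> (real k + 1)\<^sup>2 * (?cu * ?cw) + (real k + 1) * ?cd"
        using a Suc by (intro abs_expect_next_le) auto
      ultimately have "\<bar>?X a\<bar> \<le> (?cu * ?cw + ?cd) * 1 + ?cw * ((real k + 1) * ?cu) + ?cu * ((real k + 1) * ?cw)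
          + ((real k + 1)\<^sup>2 * (?cu * ?cw) + (real k + 1) * ?cd)"
        by linarith
      also have "\<dots> = (real k + 2)\<^sup>2 * (?cu * ?cw) + (real k + 2) * ?cd"
        by (simp add: power2_eq_square algebra_simps)
      finally show ?thesis .
    qed
    then have "\<bar>\<Sum>a\<in>jA. joint_pol \<xi> s a * ?X a\<bar> \<le> (real k + 2)\<^sup>2 * (?cu * ?cw) + (real k + 2) * ?cd"
      using Suc assms by (intro abs_joint_pol_avg_le) auto
    then show ?case by (simp add: algebra_simps)
  }
qed


section \<open>Derivatives along a line of softmax parameters\<close>

definition softmax_line ::
  "('n \<Rightarrow> 's \<Rightarrow> 'a \<Rightarrow> real) \<Rightarrow> ('n \<Rightarrow> 's \<Rightarrow> 'a \<Rightarrow> real) \<Rightarrow> real \<Rightarrow> ('n \<Rightarrow> 's \<Rightarrow> 'a \<Rightarrow> real)" where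
  "softmax_line \<theta> u x = softmax S A (\<lambda>l s a. \<theta> l s a + x * u l s a)"

lemma sum_exp_pos: "0 < (\<Sum>b\<in>A l. exp (f b :: real))"
  using A_ne by (intro sum_pos) auto

lemma policy_softmax: "policy (softmax S A \<eta>)"
  unfolding policy_def softmax_def
  by (auto simp: sum_divide_distrib[symmetric] sum_exp_pos[THEN less_imp_neq, symmetric]
       intro!: divide_nonneg_pos sum_exp_pos)

lemma policy_softmax_line: "policy (softmax_line \<theta> u x)"
  unfolding softmax_line_def by (rule policy_softmax)

lemma softmax_in_policies: "softmax S A \<eta> \<in> policies S A"
  using policy_softmax[of \<eta>] unfolding policies_def local_policy_def policy_def
  by (auto simp: softmax_def)

lemma softmax_cong:
  assumes "\<And>l s a. s \<in> S l \<Longrightarrow> a \<in> A l \<Longrightarrow> \<eta> l s a = \<eta>' l s a"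
  shows "softmax S A \<eta> = softmax S A \<eta>'"
proof (intro ext)
  fix l s a
  show "softmax S A \<eta> l s a = softmax S A \<eta>' l s a"
  proof (cases "s \<in> S l \<and> a \<in> A l")
    case True
    then have "(\<Sum>b\<in>A l. exp (\<eta> l s b)) = (\<Sum>b\<in>A l. exp (\<eta>' l s b))"
      using assms by (intro sum.cong) auto
    then show ?thesis using True assms unfolding softmax_def by auto
  qed (auto simp: softmax_def)
qed

lemma softmax_line_update_agent:
  assumes "\<And>l s a. l \<noteq> j \<Longrightarrow> u l s a = 0"
  shows "(softmax_line \<theta> u y)(j := softmax_line \<theta> u x j) = softmax_line \<theta> u x"
  using assms unfolding softmax_line_def softmax_def by (auto simp: fun_eq_iff)

lemma softmax_line_has_derivative:
  assumes "s \<in> S l" "a \<in> A l"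
  shows "((\<lambda>x. softmax_line \<theta> u x l s a) has_real_derivative
           softmax_line \<theta> u x l s a * centred (softmax_line \<theta> u x) u l s a) (at x)"
proof -
  define E where "E = (\<lambda>x b. exp (\<theta> l s b + x * u l s b))"
  define Z where "Z = (\<lambda>x. \<Sum>b\<in>A l. E x b)"
  have Z_pos: "Z y > 0" for y unfolding Z_def E_def by (rule sum_exp_pos)
  have E_div_Z: "softmax_line \<theta> u y l s c = E y c / Z y" if "c \<in> A l" for y c
    using that assms unfolding softmax_line_def softmax_def E_def Z_def by auto
  have dE: "((\<lambda>x. E x b) has_real_derivative E x b * u l s b) (at x)" for b
    unfolding E_def by (auto intro!: derivative_eq_intros)
  have dZ: "(Z has_real_derivative (\<Sum>b\<in>A l. E x b * u l s b)) (at x)"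
    unfolding Z_def by (intro DERIV_sum dE)
  have "((\<lambda>x. E x a / Z x) has_real_derivative
          (E x a * u l s a * Z x - E x a * (\<Sum>b\<in>A l. E x b * u l s b)) / (Z x * Z x)) (at x)"
    using Z_pos[of x] by (intro DERIV_divide dE dZ) auto
  moreover have "(E x a * u l s a * Z x - E x a * (\<Sum>b\<in>A l. E x b * u l s b)) / (Z x * Z x)
      = E x a / Z x * (u l s a - (\<Sum>c\<in>A l. E x c / Z x * u l s c))"
    using Z_pos[of x] by (simp add: field_simps sum_divide_distrib[symmetric] sum_distrib_left sum_distrib_right)
  moreover have "(\<Sum>c\<in>A l. E x c / Z x * u l s c) = (\<Sum>c\<in>A l. softmax_line \<theta> u x l s c * u l s c)"
    by (rule sum.cong) (auto simp: E_div_Z)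
  moreover have "(\<lambda>x. softmax_line \<theta> u x l s a) = (\<lambda>x. E x a / Z x)" using E_div_Z assms by auto
  ultimately show ?thesis using assms by (simp add: centred_def E_div_Z)
qed

lemma joint_pol_softmax_line_has_derivative:
  assumes "s \<in> jS" "a \<in> jA"
  shows "((\<lambda>x. joint_pol (softmax_line \<theta> u x) s a) has_real_derivative
           joint_pol (softmax_line \<theta> u x) s a * score (softmax_line \<theta> u x) u s a) (at x)"
  unfolding joint_pol_def score_def
  by (rule DERIV_prod_logderiv) (use assms in \<open>auto simp: jspace_def intro!: softmax_line_has_derivative\<close>)

lemma score_softmax_line_has_derivative:
  assumes "s \<in> jS" "a \<in> jA"
  shows "((\<lambda>x. score (softmax_line \<theta> u x) w s a) has_real_derivative
           score_deriv (softmax_line \<theta> u x) u w s a) (at x)"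
proof -
  let ?\<xi> = "softmax_line \<theta> u"
  have "((\<lambda>x. \<Sum>l\<in>UNIV. w l (s l) (a l) - (\<Sum>c\<in>A l. ?\<xi> x l (s l) c * w l (s l) c)) has_real_derivative
      (\<Sum>l\<in>UNIV. 0 - (\<Sum>c\<in>A l. ?\<xi> x l (s l) c * centred (?\<xi> x) u l (s l) c * w l (s l) c))) (at x)"
    using assms
    by (intro DERIV_sum DERIV_diff DERIV_const DERIV_cmult_right softmax_line_has_derivative)
       (auto simp: jspace_def)
  then show ?thesis by (simp add: score_def centred_def score_deriv_def sum_negf)
qed

lemma expect_next_has_derivative:
  assumes "\<And>s'. s' \<in> jS \<Longrightarrow> ((\<lambda>x. V x s') has_real_derivative V' s') (at x)"
  shows "((\<lambda>x. expect_next s a (V x)) has_real_derivative expect_next s a V') (at x)"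
  unfolding expect_next_def by (intro DERIV_sum DERIV_cmult assms)

lemma exp_reward_softmax_line_has_derivative:
  "s \<in> jS \<Longrightarrow> ((\<lambda>x. exp_reward (softmax_line \<theta> u x) j k s) has_real_derivative
     exp_reward_deriv (softmax_line \<theta> u x) u j k s) (at x)"
proof (induction k arbitrary: s)
  case 0
  let ?\<xi> = "softmax_line \<theta> u"
  have "((\<lambda>x. \<Sum>a\<in>jA. joint_pol (?\<xi> x) s a * r j s a) has_real_derivative
          (\<Sum>a\<in>jA. joint_pol (?\<xi> x) s a * score (?\<xi> x) u s a * r j s a)) (at x)"
    using 0 by (intro DERIV_sum DERIV_cmult_right joint_pol_softmax_line_has_derivative) auto
  then show ?case by (simp add: mult.assoc)
next
  case (Suc k)
  let ?\<xi> = "softmax_line \<theta> u"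
  have "((\<lambda>x. \<Sum>a\<in>jA. joint_pol (?\<xi> x) s a * expect_next s a (exp_reward (?\<xi> x) j k)) has_real_derivative
          (\<Sum>a\<in>jA. joint_pol (?\<xi> x) s a * expect_next s a (exp_reward_deriv (?\<xi> x) u j k)
             + joint_pol (?\<xi> x) s a * score (?\<xi> x) u s a * expect_next s a (exp_reward (?\<xi> x) j k))) (at x)"
    using Suc
    by (intro DERIV_sum DERIV_mult' joint_pol_softmax_line_has_derivative expect_next_has_derivative) auto
  then show ?case by (simp add: algebra_simps)
qed

lemma exp_reward_deriv_softmax_line_has_derivative:
  "s \<in> jS \<Longrightarrow> ((\<lambda>x. exp_reward_deriv (softmax_line \<theta> u x) w j k s) has_real_derivative
     exp_reward_deriv2 (softmax_line \<theta> u x) u w j k s) (at x)"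
proof (induction k arbitrary: s)
  case 0
  let ?\<xi> = "softmax_line \<theta> u"
  have "((\<lambda>x. \<Sum>a\<in>jA. joint_pol (?\<xi> x) s a * (score (?\<xi> x) w s a * r j s a)) has_real_derivative
          (\<Sum>a\<in>jA. joint_pol (?\<xi> x) s a * (score_deriv (?\<xi> x) u w s a * r j s a)
           + joint_pol (?\<xi> x) s a * score (?\<xi> x) u s a * (score (?\<xi> x) w s a * r j s a))) (at x)"
    using 0
    by (intro DERIV_sum DERIV_mult' DERIV_cmult_right joint_pol_softmax_line_has_derivative
        score_softmax_line_has_derivative) auto
  then show ?case by (simp add: algebra_simps sum.distrib)
next
  case (Suc k)
  let ?\<xi> = "softmax_line \<theta> u"
  let ?p = "?\<xi> x"
  have "((\<lambda>x. \<Sum>a\<in>jA. joint_pol (?\<xi> x) s a *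
           (score (?\<xi> x) w s a * expect_next s a (exp_reward (?\<xi> x) j k)
            + expect_next s a (exp_reward_deriv (?\<xi> x) w j k)))
        has_real_derivative
          (\<Sum>a\<in>jA. joint_pol ?p s a *
             ((score ?p w s a * expect_next s a (exp_reward_deriv ?p u j k)
               + score_deriv ?p u w s a * expect_next s a (exp_reward ?p j k))
              + expect_next s a (exp_reward_deriv2 ?p u w j k))
           + joint_pol ?p s a * score ?p u s a *
             (score ?p w s a * expect_next s a (exp_reward ?p j k) + expect_next s a (exp_reward_deriv ?p w j k))))
        (at x)"
    using Suc
    by (intro DERIV_sum DERIV_mult' DERIV_add joint_pol_softmax_line_has_derivative
        score_softmax_line_has_derivative expect_next_has_derivative exp_reward_softmax_line_has_derivative) auto
  then show ?case by (simp add: algebra_simps sum.distrib)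
qed


section \<open>The own-coordinate gradient of \<open>J\<^sub>j\<close>\<close>

lemma abs_disc_exp_reward_deriv_le:
  assumes "policy \<xi>"
  shows "\<bar>\<gamma> ^ t * (\<Sum>s\<in>jS. mu s * exp_reward_deriv \<xi> u j t s)\<bar> \<le> \<gamma> ^ t * ((real t + 1) * score_bound u)"
proof -
  have "\<bar>\<Sum>s\<in>jS. mu s * exp_reward_deriv \<xi> u j t s\<bar> \<le> (real t + 1) * score_bound u"
    using assms by (intro abs_mu_avg_le ballI abs_exp_reward_deriv_le)
  then show ?thesis using gamma by (simp add: abs_mult mult_left_mono)
qed

lemma summable_Suc_mult_power: "summable (\<lambda>t. \<gamma> ^ t * ((real t + 1) * c))"
proof -
  have "summable (\<lambda>n. real (Suc n) * \<gamma> ^ n)"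
    using geometric_deriv_sums[of \<gamma>] gamma by (auto simp: sums_iff)
  then have "summable (\<lambda>n. (real (Suc n) * \<gamma> ^ n) * c)" by (rule summable_mult2)
  then show ?thesis by (simp add: algebra_simps)
qed

lemma summable_disc_exp_reward_deriv:
  "policy \<xi> \<Longrightarrow> summable (\<lambda>t. \<gamma> ^ t * (\<Sum>s\<in>jS. mu s * exp_reward_deriv \<xi> u j t s))"
  by (rule summable_comparison_test[OF _ summable_Suc_mult_power]) (auto dest: abs_disc_exp_reward_deriv_le)

lemma Jval_softmax_line_has_derivative:
  "((\<lambda>x. Jval S A P mu \<gamma> r j (softmax_line \<theta> u x)) has_real_derivative
      (\<Sum>t. \<gamma> ^ t * (\<Sum>s\<in>jS. mu s * exp_reward_deriv (softmax_line \<theta> u x) u j t s))) (at x)"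
proof -
  let ?f = "\<lambda>t x. \<gamma> ^ t * (\<Sum>s\<in>jS. mu s * exp_reward (softmax_line \<theta> u x) j t s)"
  let ?f' = "\<lambda>t x. \<gamma> ^ t * (\<Sum>s\<in>jS. mu s * exp_reward_deriv (softmax_line \<theta> u x) u j t s)"
  have "(?f t has_real_derivative ?f' t x) (at x within UNIV)" for t x
    by (intro DERIV_cmult DERIV_sum exp_reward_softmax_line_has_derivative) auto
  moreover have "uniformly_convergent_on UNIV (\<lambda>n x. \<Sum>i<n. ?f' i x)"
    by (rule Weierstrass_m_test'[OF _ summable_Suc_mult_power[of "score_bound u"]])
       (simp add: abs_disc_exp_reward_deriv_le policy_softmax_line)
  moreover have "summable (\<lambda>n. ?f n 0)"
  proof (rule summable_comparison_test)
    show "\<exists>N. \<forall>n\<ge>N. norm (?f n 0) \<le> \<gamma> ^ n"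
      using abs_mu_avg_le[of "exp_reward (softmax_line \<theta> u 0) j _" 1]
        abs_exp_reward_le[OF policy_softmax_line] gamma
      by (auto simp: abs_mult intro!: mult_left_le)
    show "summable (\<lambda>n. \<gamma> ^ n)" using gamma by simp
  qed
  ultimately have "((\<lambda>x. \<Sum>n. ?f n x) has_real_derivative (\<Sum>n. ?f' n x)) (at x)"
    by (intro has_field_derivative_series'(2)[OF convex_UNIV]) auto
  then show ?thesis by (simp add: Jval_eq_exp_reward)
qed

definition unit_dir :: "'n \<Rightarrow> 's \<Rightarrow> 'a \<Rightarrow> ('n \<Rightarrow> 's \<Rightarrow> 'a \<Rightarrow> real)" where
  "unit_dir j s0 a0 = (\<lambda>l s a. if l = j \<and> s = s0 \<and> a = a0 then 1 else 0)"

definition grad_J :: "('n \<Rightarrow> 's \<Rightarrow> 'a \<Rightarrow> real) \<Rightarrow> 'n \<Rightarrow> 's \<Rightarrow> 'a \<Rightarrow> real" where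
  "grad_J \<theta> j s0 a0 =
     (\<Sum>t. \<gamma> ^ t * (\<Sum>s\<in>jS. mu s * exp_reward_deriv (softmax S A \<theta>) (unit_dir j s0 a0) j t s))"

lemma grad_J_sums:
  "(\<lambda>t. \<gamma> ^ t * (\<Sum>s\<in>jS. mu s * exp_reward_deriv (softmax S A \<theta>) (unit_dir j s0 a0) j t s))
     sums grad_J \<theta> j s0 a0"
  unfolding grad_J_def by (intro summable_sums summable_disc_exp_reward_deriv policy_softmax)


lemma potential_coord_has_derivative_grad_J:
  assumes nmpg: "is_NMPG E \<kappa>G S A (Jval S A P mu \<gamma> r) \<Phi>" and j: "j \<in> nbhd E \<kappa>G i"
  shows "(coord_fun (\<lambda>\<eta>. \<Phi> i (softmax S A \<eta>)) \<theta> j s0 a0 has_real_derivative grad_J \<theta> j s0 a0)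
           (at (\<theta> j s0 a0))"
proof -
  define \<theta>0 where "\<theta>0 = \<theta>(j := (\<theta> j)(s0 := (\<theta> j s0)(a0 := 0)))"
  define e where "e = unit_dir j s0 a0"
  let ?\<xi> = "softmax_line \<theta>0 e"
  let ?J = "Jval S A P mu \<gamma> r j"
  have line: "\<theta>(j := (\<theta> j)(s0 := (\<theta> j s0)(a0 := x))) = (\<lambda>l s a. \<theta>0 l s a + x * e l s a)" for x
    unfolding \<theta>0_def e_def unit_dir_def by (auto simp: fun_eq_iff)
  have "\<Phi> i (?\<xi> x) = ?J (?\<xi> x) + (\<Phi> i (?\<xi> 0) - ?J (?\<xi> 0))" for x
  proof -
    have upd: "(?\<xi> 0)(j := ?\<xi> x j) = ?\<xi> x"
      by (rule softmax_line_update_agent) (simp add: e_def unit_dir_def)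
    have "?\<xi> 0 \<in> policies S A" "local_policy (S j) (A j) (?\<xi> x j)"
      using softmax_in_policies unfolding softmax_line_def policies_def by auto
    then have "?J ((?\<xi> 0)(j := ?\<xi> x j)) - ?J (?\<xi> 0) = \<Phi> i ((?\<xi> 0)(j := ?\<xi> x j)) - \<Phi> i (?\<xi> 0)"
      using nmpg j unfolding is_NMPG_def by blast
    then show ?thesis unfolding upd by linarith
  qed
  then have "coord_fun (\<lambda>\<eta>. \<Phi> i (softmax S A \<eta>)) \<theta> j s0 a0 = (\<lambda>x. ?J (?\<xi> x) + (\<Phi> i (?\<xi> 0) - ?J (?\<xi> 0)))"
    unfolding coord_fun_def line softmax_line_def by simp
  moreover have "?\<xi> (\<theta> j s0 a0) = softmax S A \<theta>"
    unfolding softmax_line_def line[symmetric] by simp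
  moreover have "((\<lambda>x. ?J (?\<xi> x) + (\<Phi> i (?\<xi> 0) - ?J (?\<xi> 0))) has_real_derivative
      (\<Sum>t. \<gamma> ^ t * (\<Sum>s\<in>jS. mu s * exp_reward_deriv (?\<xi> (\<theta> j s0 a0)) e j t s)) + 0) (at (\<theta> j s0 a0))"
    by (intro DERIV_add Jval_softmax_line_has_derivative DERIV_const)
  ultimately show ?thesis unfolding grad_J_def e_def by simp
qed

lemma centred_sum:
  "finite I \<Longrightarrow> centred \<xi> (\<lambda>l s a. \<Sum>p\<in>I. w p * u p l s a) l sl b = (\<Sum>p\<in>I. w p * centred \<xi> (u p) l sl b)"
  unfolding centred_def
  by (simp add: sum_distrib_left algebra_simps sum.swap[of _ "A l"] right_diff_distrib sum_subtractf)

lemma score_sum: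
  "finite I \<Longrightarrow> score \<xi> (\<lambda>l s a. \<Sum>p\<in>I. w p * u p l s a) s a = (\<Sum>p\<in>I. w p * score \<xi> (u p) s a)"
  unfolding score_def by (simp add: centred_sum sum_distrib_left sum.swap[of _ UNIV])

lemma expect_next_sum: "expect_next s a (\<lambda>s'. \<Sum>p\<in>I. w p * f p s') = (\<Sum>p\<in>I. w p * expect_next s a (f p))"
  unfolding expect_next_def by (simp add: sum_distrib_left algebra_simps sum.swap[of _ jS])

lemma exp_reward_deriv_sum:
  "finite I \<Longrightarrow> exp_reward_deriv \<xi> (\<lambda>l s a. \<Sum>p\<in>I. w p * u p l s a) j t s
     = (\<Sum>p\<in>I. w p * exp_reward_deriv \<xi> (u p) j t s)"
proof (induction t arbitrary: s)
  case 0
  then show ?case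
    by (simp add: score_sum sum_distrib_left sum_distrib_right algebra_simps sum.swap[of _ jA])
next
  case (Suc t)
  have "exp_reward_deriv \<xi> (\<lambda>l s a. \<Sum>p\<in>I. w p * u p l s a) j t = (\<lambda>s. \<Sum>p\<in>I. w p * exp_reward_deriv \<xi> (u p) j t s)"
    using Suc by (simp add: fun_eq_iff)
  then show ?case
    using Suc.prems
    by (simp add: score_sum expect_next_sum sum_distrib_left sum_distrib_right algebra_simps sum.distrib
        sum.swap[of _ jA])
qed

definition agent_part :: "('n \<Rightarrow> 's \<Rightarrow> 'a \<Rightarrow> real) \<Rightarrow> 'n \<Rightarrow> ('n \<Rightarrow> 's \<Rightarrow> 'a \<Rightarrow> real)" where
  "agent_part v j = (\<lambda>l s a. if l = j \<and> s \<in> S j \<and> a \<in> A j then v j s a else 0)"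

definition restrict_agents :: "'n set \<Rightarrow> ('n \<Rightarrow> 's \<Rightarrow> 'a \<Rightarrow> real) \<Rightarrow> ('n \<Rightarrow> 's \<Rightarrow> 'a \<Rightarrow> real)" where
  "restrict_agents B u = (\<lambda>l s a. if l \<in> B then u l s a else 0)"

lemma agent_part_eq_sum:
  "agent_part v j = (\<lambda>l s a. \<Sum>p\<in>S j \<times> A j. v j (fst p) (snd p) * unit_dir j (fst p) (snd p) l s a)"
proof (intro ext)
  fix l s a
  have "(\<Sum>p\<in>S j \<times> A j. v j (fst p) (snd p) * unit_dir j (fst p) (snd p) l s a)
      = (\<Sum>p\<in>S j \<times> A j. if p = (s, a) \<and> l = j then v j s a else 0)"
    by (intro sum.cong) (auto simp: unit_dir_def)
  also have "\<dots> = agent_part v j l s a"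
    by (cases "l = j \<and> s \<in> S j \<and> a \<in> A j") (auto simp: agent_part_def intro!: sum.neutral)
  finally show "agent_part v j l s a
      = (\<Sum>p\<in>S j \<times> A j. v j (fst p) (snd p) * unit_dir j (fst p) (snd p) l s a)" ..
qed

lemma exp_reward_deriv_agent_part:
  "exp_reward_deriv \<xi> (agent_part v j) j' t s
     = (\<Sum>s0\<in>S j. \<Sum>a0\<in>A j. v j s0 a0 * exp_reward_deriv \<xi> (unit_dir j s0 a0) j' t s)"
  unfolding agent_part_eq_sum by (subst exp_reward_deriv_sum) (auto simp: sum.cartesian_product split_def)

lemma agent_norm_agent_part: "agent_norm (agent_part v j) l = (if l = j then agent_norm v j else 0)"
  unfolding agent_norm_def agent_part_def by (auto intro!: arg_cong[where f = sqrt] sum.cong)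

lemma agent_norm_restrict_agents: "agent_norm (restrict_agents B u) l = (if l \<in> B then agent_norm u l else 0)"
  unfolding agent_norm_def restrict_agents_def by auto

definition grad_pairing_term ::
  "'n set \<Rightarrow> ('n \<Rightarrow> 's \<Rightarrow> 'a \<Rightarrow> real) \<Rightarrow> ('n \<Rightarrow> 's \<Rightarrow> 'a \<Rightarrow> real) \<Rightarrow> nat \<Rightarrow> real" where
  "grad_pairing_term B v \<xi> t = (\<Sum>j\<in>B. \<Sum>s\<in>jS. mu s * exp_reward_deriv \<xi> (agent_part v j) j t s)"

lemma grad_pairing_term_eq:
  "grad_pairing_term B v \<xi> t = (\<Sum>j\<in>B. \<Sum>s0\<in>S j. \<Sum>a0\<in>A j.
     v j s0 a0 * (\<Sum>s\<in>jS. mu s * exp_reward_deriv \<xi> (unit_dir j s0 a0) j t s))"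
proof -
  have "(\<Sum>s\<in>jS. mu s * exp_reward_deriv \<xi> (agent_part v j) j t s)
      = (\<Sum>s\<in>jS. \<Sum>s0\<in>S j. \<Sum>a0\<in>A j. v j s0 a0 * (mu s * exp_reward_deriv \<xi> (unit_dir j s0 a0) j t s))"
    for j by (simp add: exp_reward_deriv_agent_part sum_distrib_left mult.left_commute)
  also have "\<dots> j = (\<Sum>s0\<in>S j. \<Sum>a0\<in>A j. \<Sum>s\<in>jS. v j s0 a0 * (mu s * exp_reward_deriv \<xi> (unit_dir j s0 a0) j t s))"
    for j by (subst sum.swap) (intro sum.cong refl sum.swap)
  finally show ?thesis unfolding grad_pairing_term_def by (simp add: sum_distrib_left)
qed

lemma grad_pairing_sums:
  "(\<lambda>t. \<gamma> ^ t * grad_pairing_term B v (softmax S A \<theta>) t)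
     sums (\<Sum>j\<in>B. \<Sum>s0\<in>S j. \<Sum>a0\<in>A j. v j s0 a0 * grad_J \<theta> j s0 a0)"
proof -
  let ?g = "\<lambda>j s0 a0 t. \<gamma> ^ t * (\<Sum>s\<in>jS. mu s * exp_reward_deriv (softmax S A \<theta>) (unit_dir j s0 a0) j t s)"
  have "\<gamma> ^ t * grad_pairing_term B v (softmax S A \<theta>) t = (\<Sum>j\<in>B. \<Sum>s0\<in>S j. \<Sum>a0\<in>A j. v j s0 a0 * ?g j s0 a0 t)"
    for t unfolding grad_pairing_term_eq by (simp add: sum_distrib_left mult.left_commute)
  moreover have "(\<lambda>t. \<Sum>j\<in>B. \<Sum>s0\<in>S j. \<Sum>a0\<in>A j. v j s0 a0 * ?g j s0 a0 t)
      sums (\<Sum>j\<in>B. \<Sum>s0\<in>S j. \<Sum>a0\<in>A j. v j s0 a0 * grad_J \<theta> j s0 a0)"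
    by (intro sums_sum sums_mult grad_J_sums)
  ultimately show ?thesis by simp
qed


section \<open>Lipschitz continuity of the block gradient\<close>

lemma block_norm_nonneg: "0 \<le> block_norm S A B u"
  unfolding block_norm_def by (auto intro!: sum_nonneg)

lemma block_norm_eq_agent_norm: "block_norm S A B u = sqrt (\<Sum>j\<in>B. (agent_norm u j)\<^sup>2)"
  unfolding block_norm_def by (simp add: agent_norm_sq)

lemma agent_norm_le_block_norm: "j \<in> B \<Longrightarrow> agent_norm u j \<le> block_norm S A B u"
  unfolding block_norm_eq_agent_norm
  by (metis agent_norm_nonneg finite member_le_sum real_le_rsqrt zero_le_power2)

lemma sum_agent_norm_le_block_norm: "(\<Sum>j\<in>B. agent_norm u j) \<le> sqrt (card B) * block_norm S A B u"
  unfolding block_norm_eq_agent_norm by (rule sum_le_sqrt_card_mult_sqrt_sum_sq)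

lemma score_bound_restrict_agents_le:
  "score_bound (restrict_agents B u) \<le> sqrt 2 * (sqrt (card B) * block_norm S A B u)"
proof -
  have "score_bound (restrict_agents B u) = sqrt 2 * (\<Sum>l\<in>B. agent_norm u l)"
    unfolding score_bound_def agent_norm_restrict_agents by (simp add: sum.If_cases)
  then show ?thesis by (simp add: sum_agent_norm_le_block_norm)
qed

lemma score_bound_agent_part: "score_bound (agent_part v j) = sqrt 2 * agent_norm v j"
  unfolding score_bound_def agent_norm_agent_part by simp

lemma score_deriv_bound_restrict_agents_agent_part:
  assumes "j \<in> B"
  shows "score_deriv_bound (restrict_agents B u) (agent_part v j) = sqrt 2 * (agent_norm u j * agent_norm v j)"
proof -
  have "(\<Sum>l\<in>UNIV. agent_norm (restrict_agents B u) l * agent_norm (agent_part v j) l)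
      = (\<Sum>l\<in>UNIV. if l = j then agent_norm u j * agent_norm v j else 0)"
    by (rule sum.cong) (auto simp: agent_norm_agent_part agent_norm_restrict_agents assms)
  then show ?thesis by (simp add: score_deriv_bound_def)
qed

lemma abs_exp_reward_deriv2_agent_part_le:
  assumes "policy \<xi>" "j \<in> B"
  shows "\<bar>\<Sum>s\<in>jS. mu s * exp_reward_deriv2 \<xi> (restrict_agents B u) (agent_part v j) j t s\<bar>
    \<le> 2 * ((real t + 1) * (real t + 2)) * sqrt (card B) * block_norm S A B u * agent_norm v j"
proof -
  let ?D = "restrict_agents B u" and ?w = "agent_part v j"
  define T where "T = real t + 1"
  define m where "m = real (card B)"
  define ND where "ND = block_norm S A B u"
  define Nv where "Nv = agent_norm v j"
  have "1 \<le> m" using assms(2) card_gt_0_iff[of B] unfolding m_def by force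
  then have "1 \<le> sqrt m" by simp
  moreover have "sqrt 2 \<le> 2" using real_sqrt_le_mono[of 2 4] by simp
  ultimately have sqrt2: "sqrt 2 \<le> 2 * sqrt m" by linarith
  have nonneg: "0 \<le> T" "0 \<le> ND" "0 \<le> Nv"
    by (simp_all add: T_def ND_def Nv_def block_norm_nonneg agent_norm_nonneg)
  have sbD: "score_bound ?D \<le> sqrt 2 * (sqrt m * ND)"
    unfolding m_def ND_def by (rule score_bound_restrict_agents_le)
  have sbw: "score_bound ?w = sqrt 2 * Nv"
    unfolding Nv_def by (rule score_bound_agent_part)
  have sdb: "score_deriv_bound ?D ?w \<le> sqrt 2 * (ND * Nv)"
    unfolding score_deriv_bound_restrict_agents_agent_part[OF assms(2)] ND_def Nv_def
    using agent_norm_le_block_norm[OF assms(2)] agent_norm_nonneg by (intro mult_left_mono mult_right_mono) auto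
  have "\<bar>\<Sum>s\<in>jS. mu s * exp_reward_deriv2 \<xi> ?D ?w j t s\<bar>
      \<le> T\<^sup>2 * (score_bound ?D * score_bound ?w) + T * score_deriv_bound ?D ?w"
    unfolding T_def by (intro abs_mu_avg_le ballI abs_exp_reward_deriv2_le assms(1))
  also have "\<dots> \<le> T\<^sup>2 * (sqrt 2 * (sqrt m * ND) * (sqrt 2 * Nv)) + T * (sqrt 2 * (ND * Nv))"
  proof (rule add_mono)
    show "T\<^sup>2 * (score_bound ?D * score_bound ?w) \<le> T\<^sup>2 * (sqrt 2 * (sqrt m * ND) * (sqrt 2 * Nv))"
      unfolding sbw using sbD nonneg by (intro mult_left_mono mult_right_mono) auto
    show "T * score_deriv_bound ?D ?w \<le> T * (sqrt 2 * (ND * Nv))"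
      using sdb nonneg by (intro mult_left_mono) auto
  qed
  also have "\<dots> = T\<^sup>2 * (2 * sqrt m * ND * Nv) + sqrt 2 * (T * ND * Nv)"
    by (simp add: algebra_simps)
  also have "\<dots> \<le> T\<^sup>2 * (2 * sqrt m * ND * Nv) + 2 * sqrt m * (T * ND * Nv)"
    using sqrt2 nonneg by (intro add_left_mono mult_right_mono) auto
  also have "\<dots> = 2 * (T * (T + 1)) * sqrt m * ND * Nv"
    by (simp add: power2_eq_square algebra_simps)
  finally show ?thesis by (simp add: T_def m_def ND_def Nv_def algebra_simps)
qed

lemma grad_pairing_term_diff_le:
  assumes agree: "\<forall>l. l \<notin> B \<longrightarrow> (\<forall>s\<in>S l. \<forall>a\<in>A l. \<theta>' l s a = \<theta> l s a)"
  shows "grad_pairing_term B v (softmax S A \<theta>) t - grad_pairing_term B v (softmax S A \<theta>') t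
    \<le> 2 * real (card B) * ((real t + 1) * (real t + 2))
       * block_norm S A B (\<lambda>l s a. \<theta> l s a - \<theta>' l s a) * block_norm S A B v"
proof -
  define D where "D = restrict_agents B (\<lambda>l s a. \<theta> l s a - \<theta>' l s a)"
  define ND where "ND = block_norm S A B (\<lambda>l s a. \<theta> l s a - \<theta>' l s a)"
  define c where "c = 2 * ((real t + 1) * (real t + 2)) * sqrt (card B) * ND"
  let ?H = "\<lambda>x. grad_pairing_term B v (softmax_line \<theta>' D x) t"
  define H' where "H' = (\<lambda>x. \<Sum>j\<in>B. \<Sum>s\<in>jS. mu s * exp_reward_deriv2 (softmax_line \<theta>' D x) D (agent_part v j) j t s)"
  have "(?H has_real_derivative H' x) (at x)" for x
    unfolding grad_pairing_term_def H'_def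
    by (intro DERIV_sum DERIV_cmult exp_reward_deriv_softmax_line_has_derivative) auto
  then obtain z where mvt: "?H 1 - ?H 0 = H' z"
    using MVT2[of 0 1 ?H H'] by auto
  have "softmax_line \<theta>' D 1 = softmax S A \<theta>"
    unfolding softmax_line_def by (rule softmax_cong) (use agree in \<open>auto simp: D_def restrict_agents_def\<close>)
  moreover have "softmax_line \<theta>' D 0 = softmax S A \<theta>'"
    unfolding softmax_line_def by simp
  ultimately have "grad_pairing_term B v (softmax S A \<theta>) t - grad_pairing_term B v (softmax S A \<theta>') t = H' z"
    using mvt by simp
  also have "\<dots> \<le> (\<Sum>j\<in>B. \<bar>\<Sum>s\<in>jS. mu s * exp_reward_deriv2 (softmax_line \<theta>' D z) D (agent_part v j) j t s\<bar>)"
    unfolding H'_def by (rule order_trans[OF abs_ge_self sum_abs])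
  also have "\<dots> \<le> (\<Sum>j\<in>B. c * agent_norm v j)"
    unfolding c_def ND_def D_def
    by (intro sum_mono abs_exp_reward_deriv2_agent_part_le policy_softmax_line)
  also have "\<dots> \<le> c * (sqrt (card B) * block_norm S A B v)"
    unfolding sum_distrib_left[symmetric] c_def ND_def
    by (intro mult_left_mono sum_agent_norm_le_block_norm) (auto simp: block_norm_nonneg)
  also have "\<dots> = 2 * (sqrt (card B) * sqrt (card B)) * ((real t + 1) * (real t + 2)) * ND * block_norm S A B v"
    unfolding c_def by (simp only: mult_ac)
  finally show ?thesis unfolding ND_def by simp
qed

lemma grad_pairing_diff_sums_block_norm_sq:
  fixes \<theta> \<theta>' :: "'n \<Rightarrow> 's \<Rightarrow> 'a \<Rightarrow> real"
  defines "v \<equiv> \<lambda>j s a. grad_J \<theta> j s a - grad_J \<theta>' j s a"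
  shows "(\<lambda>t. \<gamma> ^ t * (grad_pairing_term B v (softmax S A \<theta>) t - grad_pairing_term B v (softmax S A \<theta>') t))
    sums (block_norm S A B v)\<^sup>2"
proof -
  have "(\<lambda>t. \<gamma> ^ t * grad_pairing_term B v (softmax S A \<theta>) t - \<gamma> ^ t * grad_pairing_term B v (softmax S A \<theta>') t)
      sums ((\<Sum>j\<in>B. \<Sum>s0\<in>S j. \<Sum>a0\<in>A j. v j s0 a0 * grad_J \<theta> j s0 a0)
          - (\<Sum>j\<in>B. \<Sum>s0\<in>S j. \<Sum>a0\<in>A j. v j s0 a0 * grad_J \<theta>' j s0 a0))"
    by (intro sums_diff grad_pairing_sums)
  moreover have "\<dots> = (\<Sum>j\<in>B. \<Sum>s0\<in>S j. \<Sum>a0\<in>A j. v j s0 a0 * (grad_J \<theta> j s0 a0 - grad_J \<theta>' j s0 a0))"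
    by (simp add: sum_subtractf right_diff_distrib)
  moreover have "\<dots> = (block_norm S A B v)\<^sup>2"
    unfolding block_norm_def v_def by (simp add: sum_nonneg power2_eq_square[symmetric])
  ultimately show ?thesis by (simp add: right_diff_distrib)
qed

lemma grad_J_block_lipschitz:
  assumes agree: "\<forall>l. l \<notin> B \<longrightarrow> (\<forall>s\<in>S l. \<forall>a\<in>A l. \<theta>' l s a = \<theta> l s a)"
  shows "block_norm S A B (\<lambda>j s a. grad_J \<theta> j s a - grad_J \<theta>' j s a)
    \<le> 4 * real (card B) / (1 - \<gamma>) ^ 3 * block_norm S A B (\<lambda>j s a. \<theta> j s a - \<theta>' j s a)"
proof -
  define v where "v = (\<lambda>j s a. grad_J \<theta> j s a - grad_J \<theta>' j s a)"
  define ND where "ND = block_norm S A B (\<lambda>j s a. \<theta> j s a - \<theta>' j s a)"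
  define NV where "NV = block_norm S A B v"
  define c where "c = 4 * real (card B) / (1 - \<gamma>) ^ 3 * ND"
  let ?G = "\<lambda>\<eta> t. grad_pairing_term B v (softmax S A \<eta>) t"
  have NV_sq: "(\<lambda>t. \<gamma> ^ t * (?G \<theta> t - ?G \<theta>' t)) sums NV\<^sup>2"
    unfolding NV_def v_def by (rule grad_pairing_diff_sums_block_norm_sq)
  have geom: "(\<lambda>t. ((real t + 1) * (real t + 2)) * \<gamma> ^ t * (2 * real (card B) * ND * NV))
      sums (2 / (1 - \<gamma>) ^ 3 * (2 * real (card B) * ND * NV))"
    by (intro sums_mult2 Suc_mult_Suc_Suc_power_sums) (use gamma in auto)
  have termwise: "\<gamma> ^ t * (?G \<theta> t - ?G \<theta>' t) \<le> ((real t + 1) * (real t + 2)) * \<gamma> ^ t * (2 * real (card B) * ND * NV)"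
    for t
  proof -
    have "\<gamma> ^ t * (?G \<theta> t - ?G \<theta>' t) \<le> \<gamma> ^ t * (2 * real (card B) * ((real t + 1) * (real t + 2)) * ND * NV)"
      using grad_pairing_term_diff_le[OF agree, of v t] gamma unfolding ND_def NV_def
      by (intro mult_left_mono) auto
    then show ?thesis by (simp only: mult_ac)
  qed
  have "NV * NV \<le> 2 / (1 - \<gamma>) ^ 3 * (2 * real (card B) * ND * NV)"
    using sums_le[OF termwise NV_sq geom] by (simp add: power2_eq_square)
  also have "\<dots> = c * NV"
    by (simp add: c_def field_simps)
  finally have "NV * NV \<le> c * NV" .
  moreover have "0 \<le> NV" "0 \<le> c"
    using gamma by (simp_all add: NV_def c_def ND_def block_norm_nonneg)
  ultimately have "NV \<le> c"
    by (metis mult_right_le_imp_le order_le_less)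
  then show ?thesis unfolding NV_def v_def c_def ND_def .
qed

end

theorem mainTheorem10:
  fixes E :: "'n::finite \<Rightarrow> 'n \<Rightarrow> bool"
    and S :: "'n \<Rightarrow> 's::finite set"
    and A :: "'n \<Rightarrow> 'a::finite set"
    and P :: "'n \<Rightarrow> ('n \<Rightarrow> 's) \<Rightarrow> 'a \<Rightarrow> 's \<Rightarrow> real"
    and mu :: "('n \<Rightarrow> 's) \<Rightarrow> real"
    and \<gamma> :: real
    and r :: "'n \<Rightarrow> ('n \<Rightarrow> 's) \<Rightarrow> ('n \<Rightarrow> 'a) \<Rightarrow> real"
    and \<kappa>r \<kappa>G \<kappa> :: nat
    and \<Phi> :: "'n \<Rightarrow> ('n \<Rightarrow> 's \<Rightarrow> 'a \<Rightarrow> real) \<Rightarrow> real"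
    and i :: 'n
    and \<theta> \<theta>' :: "'n \<Rightarrow> 's \<Rightarrow> 'a \<Rightarrow> real"
  assumes graph: "undirected_graph E"
    and S_ne: "\<forall>j. S j \<noteq> {}"
    and A_ne: "\<forall>j. A j \<noteq> {}"
    and P_nonneg: "\<forall>j. \<forall>s\<in>jspace S. \<forall>a\<in>A j. \<forall>s'\<in>S j. 0 \<le> P j s a s'"
    and P_sum: "\<forall>j. \<forall>s\<in>jspace S. \<forall>a\<in>A j. (\<Sum>s'\<in>S j. P j s a s') = 1"
    and P_local: "\<forall>j s t. (\<forall>l\<in>nbhd E 1 j. s l = t l) \<longrightarrow> P j s = P j t"
    and mu_nonneg: "\<forall>s\<in>jspace S. 0 \<le> mu s"
    and mu_sum: "(\<Sum>s\<in>jspace S. mu s) = 1"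
    and gamma: "0 < \<gamma>" "\<gamma> < 1"
    and r_range: "\<forall>j. \<forall>s\<in>jspace S. \<forall>a\<in>jspace A. 0 \<le> r j s a \<and> r j s a \<le> 1"
    and r_local: "\<forall>j s a s' a'. (\<forall>l\<in>nbhd E \<kappa>r j. s l = s' l \<and> a l = a' l) \<longrightarrow> r j s a = r j s' a'"
    and nmpg: "is_NMPG E \<kappa>G S A (Jval S A P mu \<gamma> r) \<Phi>"
    and kappa: "\<kappa> \<le> \<kappa>G"
    and agree: "\<forall>j. j \<notin> nbhd E \<kappa> i \<longrightarrow> (\<forall>s\<in>S j. \<forall>a\<in>A j. \<theta>' j s a = \<theta> j s a)"
  shows "(\<forall>j\<in>nbhd E \<kappa> i. \<forall>s\<in>S j. \<forall>a\<in>A j.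
            coord_fun (\<lambda>\<eta>. \<Phi> i (softmax S A \<eta>)) \<theta> j s a differentiable (at (\<theta> j s a)) \<and>
            coord_fun (\<lambda>\<eta>. \<Phi> i (softmax S A \<eta>)) \<theta>' j s a differentiable (at (\<theta>' j s a)))
       \<and> block_norm S A (nbhd E \<kappa> i)
           (\<lambda>j s a. partial (\<lambda>\<eta>. \<Phi> i (softmax S A \<eta>)) \<theta> j s a
                  - partial (\<lambda>\<eta>. \<Phi> i (softmax S A \<eta>)) \<theta>' j s a)
         \<le> (6 * real (nk E \<kappa>) / (1 - \<gamma>) ^ 3)
             * block_norm S A (nbhd E \<kappa> i) (\<lambda>j s a. \<theta> j s a - \<theta>' j s a)"
proof -
  interpret discounted_game S A P mu \<gamma> r
    by unfold_locales (use A_ne P_nonneg P_sum mu_nonneg mu_sum gamma r_range in auto)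
  define B where "B = nbhd E \<kappa> i"
  have card_le_nk: "card B \<le> nk E \<kappa>"
    unfolding B_def nk_def by (rule Max_ge) auto
  let ?F = "\<lambda>\<eta>. \<Phi> i (softmax S A \<eta>)"
  have grad: "(coord_fun ?F \<eta> j s a has_real_derivative grad_J \<eta> j s a) (at (\<eta> j s a))" if "j \<in> B" for \<eta> j s a
    using that unfolding B_def
    by (intro potential_coord_has_derivative_grad_J[OF nmpg] subsetD[OF nbhd_mono[OF kappa]])
  then have "partial ?F \<eta> j s a = grad_J \<eta> j s a" if "j \<in> B" for \<eta> j s a
    unfolding partial_def using that by (simp add: DERIV_imp_deriv)
  then have "block_norm S A B (\<lambda>j s a. partial ?F \<theta> j s a - partial ?F \<theta>' j s a)
      = block_norm S A B (\<lambda>j s a. grad_J \<theta> j s a - grad_J \<theta>' j s a)"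
    unfolding block_norm_def by (simp cong: sum.cong)
  also have "\<dots> \<le> 4 * real (card B) / (1 - \<gamma>) ^ 3 * block_norm S A B (\<lambda>j s a. \<theta> j s a - \<theta>' j s a)"
    using agree unfolding B_def by (intro grad_J_block_lipschitz) auto
  also have "\<dots> \<le> 6 * real (nk E \<kappa>) / (1 - \<gamma>) ^ 3 * block_norm S A B (\<lambda>j s a. \<theta> j s a - \<theta>' j s a)"
    using gamma card_le_nk by (intro mult_right_mono divide_right_mono block_norm_nonneg) auto
  finally show ?thesis
    using grad real_differentiable_def unfolding B_def by blast
qed

end
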